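(* In the incremental implementation of Algorithm 2(b) below, for each receiver $j$ and each slot $t$, at the end of slot $t$: for every vector $\mathbf{u}=(u_1,\dots,u_{Q(t)})$ in the row space $U_j(t)$ of the matrix $B_j$, the linear combination $\sum_{i=1}^{Q(t)}u_i\mathbf{p}_i$ is known to receiver $j$, where $\mathbf{p}_i$ denotes the $i$-th packet in the sender's queue at the end of slot $t$ and $Q(t)$ is the queue length.
   Context: Setting: a sender broadcasts to $n$ receivers over a slotted packet erasure broadcast channel; packets are vectors over $\mathbb{F}_q$; each slot packets may arrive at the sender; the sender transmits at most one linear combination of queued packets per slot; each receiver receives it or suffers an erasure, and perfect feedback tells the sender which receivers received it. A node has seen a packet $\mathbf{p}$ if it can compute $\mathbf{p}+\mathbf{q}$ with $\mathbf{q}$ a linear combination of packets that arrived after $\mathbf{p}$. Incremental implementation of Algorithm 2(b): (1) Initialize matrices $B_1,\dots,B_n$ as empty. In each slot: (2) append the $a$ newly arrived packets to the end of the queue and append $a$ all-zero columns on the right of each $B_j$; (3) if the queue is nonempty, compute a linear combination $\mathbf{g}$ of queued packets (by a coding module) and transmit it; (4) for each receiver $j$ that received the transmission, add the coefficient vector of $\mathbf{g}$ with respect to the current queue contents as a new row of $B_j$ and perform Gaussian elimination (bringing $B_j$ to reduced row echelon form); (5) let $S_j'$ be the set of queued packets corresponding to pivot columns of $B_j$ and $S_\Delta'=\bigcap_jS_j'$; replace each $B_j$ by the submatrix obtained by deleting the columns in $S_\Delta'$ and the corresponding pivot rows; (6) drop the packets in $S_\Delta'$ from the queue. Columns of $B_j$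 are never rearranged, so column $i$ of $B_j$ corresponds to the $i$-th packet in the queue. *)

theory Defs
  imports "HOL-Analysis.Finite_Cartesian_Product"
begin

text \<open>Packets are vectors in 'f ^ 'm over a finite field 'f (playing the role of F_q).
Rows of the matrices B_j are lists of field elements; column i corresponds to the i-th
queued packet.\<close>

record ('f, 'm) state =
  queue :: "('f ^ 'm) list"
  Bmat  :: "nat \<Rightarrow> 'f list list"
  rcvd  :: "nat \<Rightarrow> ('f ^ 'm) list"

definition init_state :: "('f::zero, 'm::finite) state" where
  "init_state = \<lparr>queue = [], Bmat = (\<lambda>j. []), rcvd = (\<lambda>j. [])\<rparr>"

definition rowspace :: "nat \<Rightarrow> 'f::field list list \<Rightarrow> 'f list set" where
  "rowspace k M = {u. length u = k \<and>
     (\<exists>a::nat \<Rightarrow> 'f. \<forall>i<k. u ! i = (\<Sum>r<length M. a r * (M ! r) ! i))}"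

definition pivot :: "'f::zero list \<Rightarrow> nat" where
  "pivot r = (LEAST i. i < length r \<and> r ! i \<noteq> 0)"

definition pivots :: "'f::zero list list \<Rightarrow> nat set" where
  "pivots M = pivot ` set M"

definition is_rref :: "nat \<Rightarrow> 'f::field list list \<Rightarrow> bool" where
  "is_rref k M \<longleftrightarrow>
     (\<forall>r\<in>set M. length r = k \<and> (\<exists>i<k. r ! i \<noteq> 0) \<and> r ! pivot r = 1) \<and>
     sorted_wrt (\<lambda>r s. pivot r < pivot s) M \<and>
     (\<forall>a<length M. \<forall>b<length M. a \<noteq> b \<longrightarrow> (M ! b) ! pivot (M ! a) = 0)"

text \<open>M' is the result of Gaussian elimination applied to M (the RREF is unique).\<close>
definition rref_of :: "nat \<Rightarrow> 'f::field list list \<Rightarrow> 'f list list \<Rightarrow> bool" where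
  "rref_of k M M' \<longleftrightarrow> is_rref k M' \<and> rowspace k M' = rowspace k M"

definition knows :: "('f::field ^ 'm) list \<Rightarrow> 'f ^ 'm \<Rightarrow> bool" where
  "knows rs v \<longleftrightarrow> (\<exists>a::nat \<Rightarrow> 'f. v = (\<Sum>r<length rs. a r *s rs ! r))"

text \<open>One slot of the incremental implementation of Algorithm 2(b), with n receivers.
arr: packets arriving in this slot; c: coefficients chosen by the coding module
(g = sum of c i times the i-th queued packet); R: set of receivers that receive the
transmission (the others suffer an erasure).\<close>
definition slot_step ::
  "nat \<Rightarrow> ('f::field ^ 'm) list \<Rightarrow> (nat \<Rightarrow> 'f) \<Rightarrow> nat set \<Rightarrow> ('f, 'm::finite) state \<Rightarrow> ('f, 'm) state \<Rightarrow> bool"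
where
  "slot_step n arr c R s s' \<longleftrightarrow>
    (let q1 = queue s @ arr;
         k = length q1;
         B1 = (\<lambda>j. map (\<lambda>r. r @ replicate (length arr) 0) (Bmat s j));
         cv = map c [0..<k];
         g = (\<Sum>i<k. c i *s q1 ! i);
         tx = (q1 \<noteq> [])
     in \<exists>B2 :: nat \<Rightarrow> 'f list list.
          (\<forall>j<n. if tx \<and> j \<in> R then rref_of k (B1 j @ [cv]) (B2 j) else B2 j = B1 j) \<and>
          (let S = (\<Inter>j\<in>{..<n}. pivots (B2 j)) in
             queue s' = nths q1 (- S) \<and>
             (\<forall>j<n. Bmat s' j = map (\<lambda>r. nths r (- S)) (filter (\<lambda>r. pivot r \<notin> S) (B2 j))) \<and>
             (\<forall>j<n. rcvd s' j = (if tx \<and> j \<in> R then rcvd s j @ [g] else rcvd s j))))"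

end

theory Submission imports Defs begin

text \<open>Read each row r of B_j as the coded packet lincomb r q over the current queue q.  By
  induction over the slots, receiver j knows the coded packet of every row of B_j, and every row
  has its pivot column cleared in all other rows.  Appending zero columns for new arrivals does not
  change the coded packets; after a reception the new rows lie in the row space of the old rows
  together with the coefficient vector of the received packet g; and every dropped column is the
  pivot column of some row of B_j, so each surviving row vanishes there and deleting these columns
  again leaves its coded packet unchanged.  Since knowledge is closed under linear combinations,
  the claim extends from the rows to their row space.\<close>

abbreviation lincomb :: "'f::field list \<Rightarrow> ('f ^ 'm) list \<Rightarrow> 'f ^ 'm" where
  "lincomb u q \<equiv> \<Sum>i<length q. u ! i *s q ! i"

lemma sum_vector_smult: "(\<Sum>i\<in>A. f i) *s (v::'f::field ^ 'm) = (\<Sum>i\<in>A. f i *s v)"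
  by (simp add: vec_eq_iff sum_distrib_right)

lemma knows_zero: "knows rs 0"
  unfolding knows_def by (rule exI[of _ "\<lambda>_. 0"]) simp

lemma knows_add: "knows rs v \<Longrightarrow> knows rs w \<Longrightarrow> knows rs (v + w)"
  unfolding knows_def
  by (metis (no_types, lifting) sum.cong sum.distrib vector_sadd_rdistrib)

lemma knows_smult: "knows rs v \<Longrightarrow> knows rs (x *s v)"
  unfolding knows_def
proof clarify
  fix a
  show "\<exists>b. x *s (\<Sum>r<length rs. a r *s rs ! r) = (\<Sum>r<length rs. b r *s rs ! r)"
    by (rule exI[of _ "\<lambda>r. x * a r"]) (simp add: sum_cmul[symmetric] vector_smult_assoc)
qed

lemma knows_sum: "(\<And>i. i \<in> A \<Longrightarrow> knows rs (f i)) \<Longrightarrow> knows rs (\<Sum>i\<in>A. f i)"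
  by (induction A rule: infinite_finite_induct) (auto simp: knows_zero knows_add)

lemma knows_append: "knows rs v \<Longrightarrow> knows (rs @ xs) v"
  unfolding knows_def
proof clarify
  fix a
  show "\<exists>b. (\<Sum>r<length rs. a r *s rs ! r) = (\<Sum>r<length (rs @ xs). b r *s (rs @ xs) ! r)"
    by (rule exI[of _ "\<lambda>r. if r < length rs then a r else 0"],
        rule sum.mono_neutral_cong_left) (auto simp: nth_append)
qed

lemma knows_snoc: "knows (rs @ [g]) g"
  unfolding knows_def
proof (rule exI[of _ "\<lambda>r. if r = length rs then 1 else 0"])
  have "(\<Sum>r<length (rs @ [g]). (if r = length rs then 1 else 0) *s (rs @ [g]) ! r)
      = (\<Sum>r<Suc (length rs). if r = length rs then g else 0)"
    by (rule sum.cong) auto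
  then show "g = (\<Sum>r<length (rs @ [g]). (if r = length rs then 1 else 0) *s (rs @ [g]) ! r)"
    by (simp add: sum.delta)
qed

definition rows_known :: "('f::field ^ 'm) list \<Rightarrow> ('f ^ 'm) list \<Rightarrow> 'f list list \<Rightarrow> bool" where
  "rows_known rs q M \<longleftrightarrow> (\<forall>r\<in>set M. knows rs (lincomb r q))"

lemma rows_known_append: "rows_known rs q M \<Longrightarrow> rows_known (rs @ xs) q M"
  unfolding rows_known_def by (blast intro: knows_append)

lemma knows_rowspace:
  assumes "rows_known rs q M" and "u \<in> rowspace (length q) M"
  shows "knows rs (lincomb u q)"
proof -
  obtain a where a: "\<forall>i<length q. u ! i = (\<Sum>r<length M. a r * (M ! r) ! i)"
    using assms(2) unfolding rowspace_def by auto
  have "lincomb u q = (\<Sum>i<length q. \<Sum>r<length M. a r *s ((M ! r) ! i *s q ! i))"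
    by (intro sum.cong) (auto simp: a sum_vector_smult vector_smult_assoc)
  also have "\<dots> = (\<Sum>r<length M. a r *s lincomb (M ! r) q)"
    by (subst sum.swap) (simp add: sum_cmul)
  also have "knows rs \<dots>"
    by (rule knows_sum, rule knows_smult) (use assms(1) in \<open>auto simp: rows_known_def\<close>)
  finally show ?thesis .
qed

lemma row_in_rowspace:
  assumes "r \<in> set M" "length r = k"
  shows "r \<in> rowspace k M"
proof -
  obtain p where p: "p < length M" "M ! p = r" using assms(1) by (auto simp: in_set_conv_nth)
  have "r ! i = (\<Sum>x<length M. (if x = p then 1 else 0) * (M ! x) ! i)" for i
  proof -
    have "(\<Sum>x<length M. (if x = p then 1 else 0) * (M ! x) ! i)
        = (\<Sum>x<length M. if x = p then (M ! x) ! i else 0)"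
      by (rule sum.cong) auto
    with p show ?thesis by (simp add: sum.delta)
  qed
  with assms(2) show ?thesis
    unfolding rowspace_def by (auto intro: exI[of _ "\<lambda>x. if x = p then 1 else 0"])
qed

lemma pivot_nonzero_row:
  assumes "\<exists>i<length r. r ! i \<noteq> (0::'a::zero)"
  shows "pivot r < length r" "r ! pivot r \<noteq> 0" "i < pivot r \<Longrightarrow> r ! i = 0"
proof -
  show "pivot r < length r" "r ! pivot r \<noteq> 0"
    unfolding pivot_def using LeastI_ex[OF assms] by auto
  show "r ! i = 0" if "i < pivot r"
    using not_less_Least[OF that[unfolded pivot_def]] that \<open>pivot r < length r\<close> by auto
qed

lemma pivot_eqI:
  assumes "p < length r" "r ! p \<noteq> (0::'a::zero)" "\<And>i. i < p \<Longrightarrow> r ! i = 0"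
  shows "pivot r = p"
  unfolding pivot_def
  by (rule Least_equality) (use assms in \<open>auto simp: not_le[symmetric]\<close>)

lemma pivot_map_nth:
  assumes "sorted_wrt (<) ks" "m < length ks" "ks ! m = pivot r"
    and "\<exists>i<length r. r ! i \<noteq> (0::'a::zero)"
  shows "map ((!) r) ks ! m \<noteq> 0" "pivot (map ((!) r) ks) = m"
proof -
  note pr = pivot_nonzero_row[OF assms(4)]
  show nonzero: "map ((!) r) ks ! m \<noteq> 0" using assms(2,3) pr by simp
  show "pivot (map ((!) r) ks) = m"
  proof (rule pivot_eqI)
    fix i assume "i < m"
    then have "ks ! i < ks ! m" using assms(1,2) sorted_wrt_nth_less by blast
    then show "map ((!) r) ks ! i = 0" using assms(2,3) pr \<open>i < m\<close> by simp
  qed (use assms(2) nonzero in auto)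
qed

text \<open>The part of reduced row echelon form the argument needs; unlike is_rref it is visibly
  preserved by padding with zero columns and by the deletion step.\<close>

definition cleared_pivots :: "nat \<Rightarrow> 'f::field list list \<Rightarrow> bool" where
  "cleared_pivots k M \<longleftrightarrow> (\<forall>r\<in>set M. length r = k \<and> (\<exists>i<k. r ! i \<noteq> 0) \<and>
      (\<forall>r'\<in>set M. r' \<noteq> r \<longrightarrow> r' ! pivot r = 0))"

lemma is_rref_cleared_pivots: "is_rref k M \<Longrightarrow> cleared_pivots k M"
  unfolding is_rref_def cleared_pivots_def by (metis in_set_conv_nth)

lemma cleared_pivots_pad:
  assumes "cleared_pivots k M"
  shows "cleared_pivots (k + a) (map (\<lambda>r. r @ replicate a 0) M)"
proof -
  have pivot_pad: "pivot (r @ replicate a 0) = pivot r" "pivot r < k" if "r \<in> set M" for r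
  proof -
    have "length r = k" "\<exists>i<length r. r ! i \<noteq> 0"
      using assms that unfolding cleared_pivots_def by auto
    then show "pivot (r @ replicate a 0) = pivot r" "pivot r < k"
      using pivot_nonzero_row[of r] by (auto intro!: pivot_eqI simp: nth_append)
  qed
  show ?thesis
    unfolding cleared_pivots_def
  proof (clarsimp, intro conjI)
    fix r assume r: "r \<in> set M"
    then have "length r = k" "\<exists>i<k. r ! i \<noteq> 0"
      using assms unfolding cleared_pivots_def by auto
    then show "length r = k" "\<exists>i<k + a. (r @ replicate a 0) ! i \<noteq> 0"
      by (auto simp: nth_append)
    show "\<forall>s\<in>set M. s \<noteq> r \<longrightarrow> (s @ replicate a 0) ! pivot (r @ replicate a 0) = 0"
      using assms r pivot_pad[OF r] unfolding cleared_pivots_def by (auto simp: nth_append)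
  qed
qed

lemma cleared_pivots_zero_at:
  assumes "cleared_pivots k M" "S \<subseteq> pivots M" "r \<in> set M" "pivot r \<notin> S" "i \<in> S"
  shows "r ! i = 0"
proof -
  obtain r0 where "r0 \<in> set M" "i = pivot r0" using assms unfolding pivots_def by auto
  then show ?thesis using assms unfolding cleared_pivots_def by metis
qed

lemma nths_eq_map_nth_filter: "nths xs A = map ((!) xs) (filter (\<lambda>i. i \<in> A) [0..<length xs])"
proof (induction xs rule: rev_induct)
  case (snoc x xs)
  have "map ((!) (xs @ [x])) (filter (\<lambda>i. i \<in> A) [0..<length xs])
      = map ((!) xs) (filter (\<lambda>i. i \<in> A) [0..<length xs])"
    by (rule map_cong) (auto simp: nth_append)
  then show ?case using snoc by (simp add: nths_append)
qed simp

lemma lincomb_nths_compl: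
  assumes "length r = length q" "\<And>i. i \<in> S \<Longrightarrow> i < length q \<Longrightarrow> r ! i = 0"
  shows "lincomb (nths r (- S)) (nths q (- S)) = lincomb r q"
proof -
  define ks where "ks = filter (\<lambda>i. i \<notin> S) [0..<length q]"
  define f where "f i = r ! i *s q ! i" for i
  have "lincomb (nths r (- S)) (nths q (- S)) = (\<Sum>m<length ks. map f ks ! m)"
    using assms(1) by (auto simp: nths_eq_map_nth_filter ks_def f_def intro!: sum.cong)
  also have "\<dots> = sum_list (map f ks)"
    by (simp add: sum_list_sum_nth atLeast0LessThan)
  also have "\<dots> = sum f (set ks)"
    by (rule sum_list_distinct_conv_sum_set) (simp add: ks_def)
  also have "\<dots> = sum f {..<length q}"
    by (rule sum.mono_neutral_left) (auto simp: ks_def f_def assms(2))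
  finally show ?thesis by (simp add: f_def)
qed

lemma cleared_pivots_delete:
  assumes "cleared_pivots k M" "S \<subseteq> pivots M"
  shows "cleared_pivots (card ({..<k} - S))
           (map (\<lambda>r. nths r (- S)) (filter (\<lambda>r. pivot r \<notin> S) M))"
proof -
  define ks where "ks = filter (\<lambda>i. i \<notin> S) [0..<k]"
  have len_ks: "length ks = card ({..<k} - S)"
  proof -
    have "set ks = {..<k} - S" unfolding ks_def by auto
    then show ?thesis by (metis distinct_card distinct_filter distinct_upt ks_def)
  qed
  have del: "nths r (- S) = map ((!) r) ks" if "r \<in> set M" for r
    using assms(1) that unfolding cleared_pivots_def
    by (simp add: nths_eq_map_nth_filter ks_def)
  have sorted_ks: "sorted_wrt (<) ks" unfolding ks_def by (simp add: sorted_wrt_filter)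
  have pivot_del: "\<exists>m<length ks. ks ! m = pivot r \<and> map ((!) r) ks ! m \<noteq> 0 \<and>
      pivot (map ((!) r) ks) = m"
    if r: "r \<in> set M" "pivot r \<notin> S" for r
  proof -
    have "length r = k" and nonzero: "\<exists>i<length r. r ! i \<noteq> 0"
      using assms(1) r unfolding cleared_pivots_def by auto
    then have "pivot r \<in> set ks" unfolding ks_def using r pivot_nonzero_row(1) by auto
    then obtain m where "m < length ks" "ks ! m = pivot r" by (auto simp: in_set_conv_nth)
    then show ?thesis using pivot_map_nth[OF sorted_ks _ _ nonzero] by blast
  qed
  have "cleared_pivots (length ks) (map (\<lambda>r. map ((!) r) ks) (filter (\<lambda>r. pivot r \<notin> S) M))"
    (is "cleared_pivots _ ?M'")
    unfolding cleared_pivots_def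
  proof (rule ballI, intro conjI)
    fix nr assume "nr \<in> set ?M'"
    then obtain r where r: "r \<in> set M" "pivot r \<notin> S" and nr: "nr = map ((!) r) ks" by auto
    obtain m where m: "m < length ks" "ks ! m = pivot r" "nr ! m \<noteq> 0" "pivot nr = m"
      using pivot_del[OF r] nr by blast
    then show "\<exists>i<length ks. nr ! i \<noteq> 0" by blast
    show "length nr = length ks" using nr by simp
    show "\<forall>ns\<in>set ?M'. ns \<noteq> nr \<longrightarrow> ns ! pivot nr = 0"
    proof (intro ballI impI)
      fix ns assume "ns \<in> set ?M'" "ns \<noteq> nr"
      then obtain s where "s \<in> set M" "ns = map ((!) s) ks" "s \<noteq> r" using nr by auto
      then show "ns ! pivot nr = 0" using assms(1) r m unfolding cleared_pivots_def by auto
    qed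
  qed
  moreover have "map (\<lambda>r. nths r (- S)) (filter (\<lambda>r. pivot r \<notin> S) M) = ?M'"
    by (rule map_cong) (auto simp: del)
  ultimately show ?thesis
    by (simp only: len_ks)
qed

definition receiver_inv :: "('f::field, 'm::finite) state \<Rightarrow> nat \<Rightarrow> bool" where
  "receiver_inv s j \<longleftrightarrow>
     cleared_pivots (length (queue s)) (Bmat s j) \<and> rows_known (rcvd s j) (queue s) (Bmat s j)"

lemma rows_known_pad:
  assumes "cleared_pivots (length q) M" "rows_known rs q M"
  shows "rows_known rs (q @ arr) (map (\<lambda>r. r @ replicate (length arr) 0) M)"
  unfolding rows_known_def
proof (rule ballI)
  fix r' assume "r' \<in> set (map (\<lambda>r. r @ replicate (length arr) 0) M)"
  then obtain r where r: "r \<in> set M" "r' = r @ replicate (length arr) 0" by auto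
  have "length r = length q" using assms(1) r(1) unfolding cleared_pivots_def by auto
  then have "lincomb r' (q @ arr) = lincomb r q"
    unfolding r(2) by (intro sum.mono_neutral_cong_right) (auto simp: nth_append)
  then show "knows rs (lincomb r' (q @ arr))"
    using assms(2) r(1) unfolding rows_known_def by simp
qed

lemma rows_known_rref:
  assumes "rows_known rs q M" "rref_of (length q) (M @ [cv]) M'"
  shows "rows_known (rs @ [lincomb cv q]) q M'"
proof -
  have known: "rows_known (rs @ [lincomb cv q]) q (M @ [cv])"
    using rows_known_append[OF assms(1)] knows_snoc unfolding rows_known_def by auto
  have "r \<in> rowspace (length q) (M @ [cv])" if "r \<in> set M'" for r
    using assms(2) that row_in_rowspace[OF that]
    unfolding rref_of_def is_rref_def by auto
  then show ?thesis
    using knows_rowspace[OF known] unfolding rows_known_def by blast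
qed

lemma rows_known_delete:
  assumes "cleared_pivots (length q) M" "rows_known rs q M" "S \<subseteq> pivots M"
  shows "rows_known rs (nths q (- S)) (map (\<lambda>r. nths r (- S)) (filter (\<lambda>r. pivot r \<notin> S) M))"
  unfolding rows_known_def
proof (rule ballI)
  fix r' assume "r' \<in> set (map (\<lambda>r. nths r (- S)) (filter (\<lambda>r. pivot r \<notin> S) M))"
  then obtain r where r: "r \<in> set M" "pivot r \<notin> S" and r': "r' = nths r (- S)" by auto
  have "length r = length q" using assms(1) r unfolding cleared_pivots_def by auto
  then have "lincomb r' (nths q (- S)) = lincomb r q"
    unfolding r' using cleared_pivots_zero_at[OF assms(1,3) r] by (intro lincomb_nths_compl) auto
  then show "knows rs (lincomb r' (nths q (- S)))"
    using assms(2) r unfolding rows_known_def by simp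
qed

lemma length_nths_compl: "length (nths q (- S)) = card ({..<length q} - S)"
  unfolding length_nths by (rule arg_cong[where f = card]) auto

lemma receiver_inv_slot_step:
  assumes step: "slot_step n arr c R s s'" and inv: "receiver_inv s j" and "j < n"
  shows "receiver_inv s' j"
proof -
  define q1 where "q1 = queue s @ arr"
  define B1 where "B1 = (\<lambda>j. map (\<lambda>r. r @ replicate (length arr) 0) (Bmat s j))"
  define cv where "cv = map c [0..<length q1]"
  define g where "g = (\<Sum>i<length q1. c i *s q1 ! i)"
  define tx where "tx = (q1 \<noteq> [])"
  obtain B2 where
    B2: "\<And>j. j < n \<Longrightarrow> if tx \<and> j \<in> R then rref_of (length q1) (B1 j @ [cv]) (B2 j) else B2 j = B1 j"
    and rest: "let S = (\<Inter>j\<in>{..<n}. pivots (B2 j)) in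
             queue s' = nths q1 (- S) \<and>
             (\<forall>j<n. Bmat s' j = map (\<lambda>r. nths r (- S)) (filter (\<lambda>r. pivot r \<notin> S) (B2 j))) \<and>
             (\<forall>j<n. rcvd s' j = (if tx \<and> j \<in> R then rcvd s j @ [g] else rcvd s j))"
    using step unfolding slot_step_def Let_def q1_def B1_def cv_def g_def tx_def by blast
  define S where "S = (\<Inter>j\<in>{..<n}. pivots (B2 j))"
  have queue': "queue s' = nths q1 (- S)"
    and Bmat': "Bmat s' j = map (\<lambda>r. nths r (- S)) (filter (\<lambda>r. pivot r \<notin> S) (B2 j))"
    and rcvd': "rcvd s' j = (if tx \<and> j \<in> R then rcvd s j @ [g] else rcvd s j)"
    using rest \<open>j < n\<close> unfolding S_def Let_def by auto
  have cleared1: "cleared_pivots (length q1) (B1 j)" and known1: "rows_known (rcvd s j) q1 (B1 j)"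
    using inv cleared_pivots_pad rows_known_pad
    unfolding receiver_inv_def B1_def q1_def by fastforce+
  have cleared2: "cleared_pivots (length q1) (B2 j)" and known2: "rows_known (rcvd s' j) q1 (B2 j)"
  proof (atomize (full), cases "tx \<and> j \<in> R")
    case True
    then have rref: "rref_of (length q1) (B1 j @ [cv]) (B2 j)" using B2 \<open>j < n\<close> by auto
    have "lincomb cv q1 = g" unfolding cv_def g_def by (rule sum.cong) auto
    then show "cleared_pivots (length q1) (B2 j) \<and> rows_known (rcvd s' j) q1 (B2 j)"
      using rref rows_known_rref[OF known1 rref] rcvd' True
      unfolding rref_of_def by (auto intro: is_rref_cleared_pivots)
  next
    case False
    then show "cleared_pivots (length q1) (B2 j) \<and> rows_known (rcvd s' j) q1 (B2 j)"
      using B2 \<open>j < n\<close> rcvd' cleared1 known1 by auto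
  qed
  have "S \<subseteq> pivots (B2 j)" unfolding S_def using \<open>j < n\<close> by auto
  then show ?thesis
    unfolding receiver_inv_def queue' Bmat' length_nths_compl
    using cleared_pivots_delete[OF cleared2] rows_known_delete[OF cleared2 known2] by blast
qed

theorem theorem7:
  fixes n :: nat
    and st :: "nat \<Rightarrow> ('f::{field,finite}, 'm::finite) state"
    and arr :: "nat \<Rightarrow> ('f ^ 'm) list"
    and c :: "nat \<Rightarrow> nat \<Rightarrow> 'f"
    and R :: "nat \<Rightarrow> nat set"
  assumes "st 0 = init_state"
    and "\<And>t. slot_step n (arr (Suc t)) (c (Suc t)) (R (Suc t)) (st t) (st (Suc t))"
    and "j < n"
    and "u \<in> rowspace (length (queue (st t))) (Bmat (st t) j)"
  shows "knows (rcvd (st t) j) (\<Sum>i<length (queue (st t)). u ! i *s queue (st t) ! i)"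
proof -
  have "\<forall>j<n. receiver_inv (st t) j"
  proof (induction t)
    case 0
    show ?case
      using assms(1) by (simp add: receiver_inv_def init_state_def cleared_pivots_def rows_known_def)
  next
    case (Suc t)
    show ?case using receiver_inv_slot_step[OF assms(2)] Suc.IH by blast
  qed
  then show ?thesis
    using knows_rowspace[OF _ assms(4)] assms(3) unfolding receiver_inv_def by blast
qed

end
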